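(* Let $\mathcal C$ be a full subcategory of grading-restricted generalized $V$-modules for a vertex operator algebra $V$ such that $0\in\mathcal C$, $\mathcal C$ is closed under submodules, quotients and finite direct sums, and every module in $\mathcal C$ is finitely generated. For a weak $V$-module $X$, let $I_X$ be the set of submodules of $X$ that are objects of $\mathcal C$, directed by inclusion, let $\alpha_X:I_X\to\mathcal C$ be the direct system $W\mapsto W$ with inclusions as transition maps, and let $Q_X:\varinjlim\alpha_X\to X$ be the unique $V$-homomorphism with $Q_X\circ\phi_W=i_W$ for all $W\in I_X$, where $i_W:W\to X$ is the inclusion and $\phi_W:W\to\varinjlim\alpha_X$ are the canonical maps of the direct limit in the category of weak $V$-modules. Then $Q_X$ is injective for every weak module $X$, and $Q_X$ is surjective if and only if $X$ is an object of $\mathrm{Ind}(\mathcal C)$.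
   Context: $\mathrm{Ind}(\mathcal C)$ (the direct limit completion) is the full subcategory of weak $V$-modules isomorphic to direct limits, in the category of weak $V$-modules, of direct systems $\alpha:I\to\mathcal C$ indexed by directed sets. *)

theory Defs
  imports Complex_Main
begin

class cvec = ab_group_add +
  fixes cscale :: "complex \<Rightarrow> 'a \<Rightarrow> 'a" (infixr "*c" 75)
  assumes cscale_add_right: "a *c (x + y) = a *c x + a *c y"
    and cscale_add_left: "(a + b) *c x = a *c x + b *c x"
    and cscale_assoc: "a *c (b *c x) = (a * b) *c x"
    and cscale_one: "1 *c x = x"

definition csp :: "'a::cvec set \<Rightarrow> 'a set" where
  "csp S = {x. \<exists>F c. finite F \<and> F \<subseteq> S \<and> x = (\<Sum>s\<in>F. c s *c s)}"

definition fin_dim :: "'a::cvec set \<Rightarrow> bool" where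
  "fin_dim S \<longleftrightarrow> (\<exists>F. finite F \<and> F \<subseteq> S \<and> S \<subseteq> csp F)"

definition csubspace :: "'a::cvec set \<Rightarrow> bool" where
  "csubspace M \<longleftrightarrow> 0 \<in> M \<and> (\<forall>x\<in>M. \<forall>y\<in>M. x + y \<in> M) \<and> (\<forall>a. \<forall>x\<in>M. a *c x \<in> M)"

text \<open>Sum of a finitely supported family (all sums below are finite by truncation).\<close>
definition fsum :: "(nat \<Rightarrow> 'a::comm_monoid_add) \<Rightarrow> 'a" where
  "fsum f = sum f {i. f i \<noteq> 0}"

definition sgn_int :: "int \<Rightarrow> complex" where
  "sgn_int l = (if even l then 1 else -1)"

section \<open>Vertex operators (mode convention: Y(u,x) = sum u_n x^(-n-1), u_n = Y u n)\<close>

definition jacobi ::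
  "('v::cvec \<Rightarrow> int \<Rightarrow> 'v \<Rightarrow> 'v) \<Rightarrow> 'm::cvec set \<Rightarrow> ('v \<Rightarrow> int \<Rightarrow> 'm \<Rightarrow> 'm) \<Rightarrow> bool" where
  "jacobi Vop M Y \<longleftrightarrow>
    (\<forall>u v. \<forall>w\<in>M. \<forall>l m n.
      fsum (\<lambda>i. (of_int m gchoose i) *c Y (Vop u (l + int i) v) (m + n - int i) w)
      = fsum (\<lambda>i. ((-1) ^ i * (of_int l gchoose i)) *c
                 (Y u (m + l - int i) (Y v (n + int i) w)
                  - sgn_int l *c Y v (n + l - int i) (Y u (m + int i) w))))"

definition weak_module ::
  "('v::cvec \<Rightarrow> int \<Rightarrow> 'v \<Rightarrow> 'v) \<Rightarrow> 'v \<Rightarrow> 'm::cvec set \<Rightarrow> ('v \<Rightarrow> int \<Rightarrow> 'm \<Rightarrow> 'm) \<Rightarrow> bool" where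
  "weak_module Vop vac M Y \<longleftrightarrow>
     csubspace M
   \<and> (\<forall>u n. \<forall>w\<in>M. Y u n w \<in> M)
   \<and> (\<forall>u n a b. \<forall>w\<in>M. \<forall>w'\<in>M. Y u n (a *c w + b *c w') = a *c Y u n w + b *c Y u n w')
   \<and> (\<forall>u u' n a b. \<forall>w\<in>M. Y (a *c u + b *c u') n w = a *c Y u n w + b *c Y u' n w)
   \<and> (\<forall>u. \<forall>w\<in>M. \<exists>N. \<forall>n\<ge>N. Y u n w = 0)
   \<and> (\<forall>n. \<forall>w\<in>M. Y vac n w = (if n = -1 then w else 0))
   \<and> jacobi Vop M Y"

definition Vgr :: "('v::cvec \<Rightarrow> int \<Rightarrow> 'v \<Rightarrow> 'v) \<Rightarrow> 'v \<Rightarrow> int \<Rightarrow> 'v set" where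
  "Vgr Vop om n = {v. Vop om 1 v = of_int n *c v}"

text \<open>Vertex operator algebra (Lepowsky--Li) on the whole type 'v, vacuum vac, conformal vector om,
  L(n) = om_(n+1).\<close>
definition voa :: "('v::cvec \<Rightarrow> int \<Rightarrow> 'v \<Rightarrow> 'v) \<Rightarrow> 'v \<Rightarrow> 'v \<Rightarrow> bool" where
  "voa Vop vac om \<longleftrightarrow>
     weak_module Vop vac UNIV Vop
   \<and> (\<forall>u. Vop u (-1) vac = u \<and> (\<forall>n\<ge>0. Vop u n vac = 0))
   \<and> (\<exists>c::complex. \<forall>m n v.
        Vop om (m + 1) (Vop om (n + 1) v) - Vop om (n + 1) (Vop om (m + 1) v)
        = of_int (m - n) *c Vop om (m + n + 1) v
          + (if m + n = 0 then of_int (m ^ 3 - m) / 12 * c else 0) *c v)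
   \<and> (\<forall>u n v. Vop (Vop om 0 u) n v = of_int (- n) *c Vop u (n - 1) v)
   \<and> UNIV \<subseteq> csp (\<Union>n. Vgr Vop om n)
   \<and> (\<forall>n. fin_dim (Vgr Vop om n))
   \<and> (\<exists>N. \<forall>n<N. Vgr Vop om n = {0})"

definition gen_eig :: "'m::cvec set \<Rightarrow> ('v \<Rightarrow> int \<Rightarrow> 'm \<Rightarrow> 'm) \<Rightarrow> 'v \<Rightarrow> complex \<Rightarrow> 'm set" where
  "gen_eig M Y om mu = {w\<in>M. \<exists>k. ((\<lambda>x. Y om 1 x - mu *c x) ^^ k) w = 0}"

definition gr_gen_module ::
  "('v::cvec \<Rightarrow> int \<Rightarrow> 'v \<Rightarrow> 'v) \<Rightarrow> 'v \<Rightarrow> 'v \<Rightarrow> 'm::cvec set \<Rightarrow> ('v \<Rightarrow> int \<Rightarrow> 'm \<Rightarrow> 'm) \<Rightarrow> bool" where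
  "gr_gen_module Vop vac om M Y \<longleftrightarrow>
     weak_module Vop vac M Y
   \<and> M \<subseteq> csp (\<Union>mu. gen_eig M Y om mu)
   \<and> (\<forall>mu. fin_dim (gen_eig M Y om mu))
   \<and> (\<forall>mu. \<exists>N::int. \<forall>k<N. gen_eig M Y om (mu + of_int k) = {0})"

definition vhom :: "'m::cvec set \<Rightarrow> ('v \<Rightarrow> int \<Rightarrow> 'm \<Rightarrow> 'm) \<Rightarrow> 'n::cvec set \<Rightarrow> ('v \<Rightarrow> int \<Rightarrow> 'n \<Rightarrow> 'n)
   \<Rightarrow> ('m \<Rightarrow> 'n) \<Rightarrow> bool" where
  "vhom M Y N Y' f \<longleftrightarrow>
     (\<forall>x\<in>M. f x \<in> N)
   \<and> (\<forall>x\<in>M. \<forall>y\<in>M. f (x + y) = f x + f y)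
   \<and> (\<forall>a. \<forall>x\<in>M. f (a *c x) = a *c f x)
   \<and> (\<forall>u n. \<forall>w\<in>M. f (Y u n w) = Y' u n (f w))"

definition viso :: "'m::cvec set \<Rightarrow> ('v \<Rightarrow> int \<Rightarrow> 'm \<Rightarrow> 'm) \<Rightarrow> 'n::cvec set \<Rightarrow> ('v \<Rightarrow> int \<Rightarrow> 'n \<Rightarrow> 'n)
   \<Rightarrow> ('m \<Rightarrow> 'n) \<Rightarrow> bool" where
  "viso M Y N Y' f \<longleftrightarrow> vhom M Y N Y' f \<and> bij_betw f M N"

definition submodule :: "'m::cvec set \<Rightarrow> 'm set \<Rightarrow> ('v \<Rightarrow> int \<Rightarrow> 'm \<Rightarrow> 'm) \<Rightarrow> bool" where
  "submodule N M Y \<longleftrightarrow> N \<subseteq> M \<and> csubspace N \<and> (\<forall>u n. \<forall>w\<in>N. Y u n w \<in> N)"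

definition gen_sub :: "'m::cvec set \<Rightarrow> ('v \<Rightarrow> int \<Rightarrow> 'm \<Rightarrow> 'm) \<Rightarrow> 'm set \<Rightarrow> 'm set" where
  "gen_sub M Y S = \<Inter>{N. submodule N M Y \<and> S \<subseteq> N}"

definition fin_gen :: "'m::cvec set \<Rightarrow> ('v \<Rightarrow> int \<Rightarrow> 'm \<Rightarrow> 'm) \<Rightarrow> bool" where
  "fin_gen M Y \<longleftrightarrow> (\<exists>S. finite S \<and> S \<subseteq> M \<and> gen_sub M Y S = M)"

text \<open>C is represented by a set of modules carried in the type 'c; a module of any type is an
  object of C iff it is isomorphic to a member (C is a full, isomorphism-closed subcategory).\<close>
definition inC :: "('c::cvec set \<times> ('v \<Rightarrow> int \<Rightarrow> 'c \<Rightarrow> 'c)) set \<Rightarrow> 'm::cvec set \<Rightarrow> ('v \<Rightarrow> int \<Rightarrow> 'm \<Rightarrow> 'm) \<Rightarrow> bool" where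
  "inC C M Y \<longleftrightarrow> (\<exists>(A, YA)\<in>C. \<exists>f. viso M Y A YA f)"

definition good_class ::
  "('v::cvec \<Rightarrow> int \<Rightarrow> 'v \<Rightarrow> 'v) \<Rightarrow> 'v \<Rightarrow> 'v \<Rightarrow> ('c::cvec set \<times> ('v \<Rightarrow> int \<Rightarrow> 'c \<Rightarrow> 'c)) set \<Rightarrow> bool" where
  "good_class Vop vac om C \<longleftrightarrow>
     (\<forall>(A, YA)\<in>C. gr_gen_module Vop vac om A YA \<and> fin_gen A YA)
   \<and> (\<exists>(A, YA)\<in>C. A = {0})
   \<and> (\<forall>(A, YA)\<in>C. \<forall>N. submodule N A YA \<longrightarrow> inC C N YA)
   \<and> (\<forall>(A, YA)\<in>C. \<forall>N. submodule N A YA \<longrightarrow>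
        (\<exists>(B, YB)\<in>C. \<exists>f. vhom A YA B YB f \<and> f ` A = B \<and> {x\<in>A. f x = 0} = N))
   \<and> (\<forall>(A, YA)\<in>C. \<forall>(B, YB)\<in>C. \<exists>(D, YD)\<in>C. \<exists>i1 i2.
        vhom A YA D YD i1 \<and> vhom B YB D YD i2
        \<and> (\<forall>d\<in>D. \<exists>!p. p \<in> A \<times> B \<and> d = i1 (fst p) + i2 (snd p)))"

definition dsys ::
  "('v::cvec \<Rightarrow> int \<Rightarrow> 'v \<Rightarrow> 'v) \<Rightarrow> 'v \<Rightarrow> 'i set \<Rightarrow> ('i \<Rightarrow> 'i \<Rightarrow> bool) \<Rightarrow> ('i \<Rightarrow> 'm::cvec set)
   \<Rightarrow> ('i \<Rightarrow> 'v \<Rightarrow> int \<Rightarrow> 'm \<Rightarrow> 'm) \<Rightarrow> ('i \<Rightarrow> 'i \<Rightarrow> 'm \<Rightarrow> 'm) \<Rightarrow> bool" where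
  "dsys Vop vac I le M Y f \<longleftrightarrow>
     (\<forall>i\<in>I. le i i)
   \<and> (\<forall>i\<in>I. \<forall>j\<in>I. \<forall>k\<in>I. le i j \<longrightarrow> le j k \<longrightarrow> le i k)
   \<and> (\<forall>i\<in>I. \<forall>j\<in>I. \<exists>k\<in>I. le i k \<and> le j k)
   \<and> (\<forall>i\<in>I. weak_module Vop vac (M i) (Y i))
   \<and> (\<forall>i\<in>I. \<forall>j\<in>I. le i j \<longrightarrow> vhom (M i) (Y i) (M j) (Y j) (f i j))
   \<and> (\<forall>i\<in>I. \<forall>x\<in>M i. f i i x = x)
   \<and> (\<forall>i\<in>I. \<forall>j\<in>I. \<forall>k\<in>I. le i j \<longrightarrow> le j k \<longrightarrow> (\<forall>x\<in>M i. f j k (f i j x) = f i k x))"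

definition cocone ::
  "'i set \<Rightarrow> ('i \<Rightarrow> 'i \<Rightarrow> bool) \<Rightarrow> ('i \<Rightarrow> 'm::cvec set) \<Rightarrow> ('i \<Rightarrow> 'v \<Rightarrow> int \<Rightarrow> 'm \<Rightarrow> 'm)
   \<Rightarrow> ('i \<Rightarrow> 'i \<Rightarrow> 'm \<Rightarrow> 'm) \<Rightarrow> 'n::cvec set \<Rightarrow> ('v \<Rightarrow> int \<Rightarrow> 'n \<Rightarrow> 'n) \<Rightarrow> ('i \<Rightarrow> 'm \<Rightarrow> 'n) \<Rightarrow> bool" where
  "cocone I le M Y f N YN g \<longleftrightarrow>
     (\<forall>i\<in>I. vhom (M i) (Y i) N YN (g i))
   \<and> (\<forall>i\<in>I. \<forall>j\<in>I. le i j \<longrightarrow> (\<forall>x\<in>M i. g j (f i j x) = g i x))"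

text \<open>(N, g) is a direct limit in the category of weak modules, with the universal property
  tested against all weak modules whose carrier lives in the type 'z.\<close>
definition colim_wrt ::
  "'z::cvec itself \<Rightarrow> ('v::cvec \<Rightarrow> int \<Rightarrow> 'v \<Rightarrow> 'v) \<Rightarrow> 'v \<Rightarrow> 'i set \<Rightarrow> ('i \<Rightarrow> 'i \<Rightarrow> bool)
   \<Rightarrow> ('i \<Rightarrow> 'm::cvec set) \<Rightarrow> ('i \<Rightarrow> 'v \<Rightarrow> int \<Rightarrow> 'm \<Rightarrow> 'm) \<Rightarrow> ('i \<Rightarrow> 'i \<Rightarrow> 'm \<Rightarrow> 'm)
   \<Rightarrow> 'n::cvec set \<Rightarrow> ('v \<Rightarrow> int \<Rightarrow> 'n \<Rightarrow> 'n) \<Rightarrow> ('i \<Rightarrow> 'm \<Rightarrow> 'n) \<Rightarrow> bool" where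
  "colim_wrt T Vop vac I le M Y f N YN g \<longleftrightarrow>
     weak_module Vop vac N YN
   \<and> cocone I le M Y f N YN g
   \<and> (\<forall>(Z::'z set) YZ h. weak_module Vop vac Z YZ \<and> cocone I le M Y f Z YZ h \<longrightarrow>
        (\<exists>u. vhom N YN Z YZ u \<and> (\<forall>i\<in>I. \<forall>x\<in>M i. u (g i x) = h i x)
           \<and> (\<forall>u'. vhom N YN Z YZ u' \<and> (\<forall>i\<in>I. \<forall>x\<in>M i. u' (g i x) = h i x)
                   \<longrightarrow> (\<forall>y\<in>N. u' y = u y))))"

text \<open>X belongs to Ind(C): X (with cocone maps g) is a direct limit of a direct system of objects
  of C indexed by a directed set (index type 'i, carriers in type 'm), universal w.r.t. type 'z.\<close>
definition in_Ind ::
  "'z::cvec itself \<Rightarrow> 'i itself \<Rightarrow> 'm::cvec itself \<Rightarrow> ('v::cvec \<Rightarrow> int \<Rightarrow> 'v \<Rightarrow> 'v) \<Rightarrow> 'v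
   \<Rightarrow> ('c::cvec set \<times> ('v \<Rightarrow> int \<Rightarrow> 'c \<Rightarrow> 'c)) set \<Rightarrow> 'x::cvec set \<Rightarrow> ('v \<Rightarrow> int \<Rightarrow> 'x \<Rightarrow> 'x) \<Rightarrow> bool" where
  "in_Ind T Ti Tm Vop vac C X YX \<longleftrightarrow>
     (\<exists>(I::'i set) le (M::'i \<Rightarrow> 'm set) Y f g.
        dsys Vop vac I le M Y f \<and> (\<forall>i\<in>I. inC C (M i) (Y i))
        \<and> colim_wrt T Vop vac I le M Y f X YX g)"

end

theory Submission
  imports Defs
begin

text \<open>Every element of the direct limit L of the submodules in C comes from one of them, and these
  submodules form a directed family: two of them lie in the image of the direct sum of their
  models in C, and images of objects of C are again in C, being quotients. Hence two elements
  of L with the same image under Q can be pushed into a common submodule, on which Q is the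
  identity, so Q is injective; its image is the union of the submodules in C. If Q is onto,
  X is the directed union of these submodules and therefore their direct limit. Conversely,
  a direct limit of objects of C is the union of the images of the cocone maps, since that
  union is a submodule through which the universal property factors; these images are
  submodules in C, so Q is onto.\<close>

lemma cscale_zero_left [simp]: "(0::complex) *c (x::'a::cvec) = 0"
proof -
  have "(0 + 0::complex) *c x = 0 *c x + 0 *c x" by (rule cscale_add_left)
  thus ?thesis by simp
qed

lemma cscale_zero_right [simp]: "a *c (0::'a::cvec) = 0"
proof -
  have "a *c (0 + 0::'a) = a *c 0 + a *c 0" by (rule cscale_add_right)
  thus ?thesis by simp
qed

lemma cscale_minus_one: "(-1::complex) *c (x::'a::cvec) = - x"
proof -
  have "x + (-1) *c x = (1 + -1) *c x"
    by (simp only: cscale_add_left cscale_one)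
  hence "x + (-1) *c x = 0" by simp
  thus ?thesis by (rule minus_unique[symmetric])
qed

lemma csubspace_zero: "csubspace M \<Longrightarrow> 0 \<in> M"
  and csubspace_add: "csubspace M \<Longrightarrow> x \<in> M \<Longrightarrow> y \<in> M \<Longrightarrow> x + y \<in> M"
  and csubspace_scale: "csubspace M \<Longrightarrow> x \<in> M \<Longrightarrow> a *c x \<in> M"
  by (simp_all add: csubspace_def)

lemma csubspace_diff: "csubspace M \<Longrightarrow> x \<in> M \<Longrightarrow> y \<in> M \<Longrightarrow> x - y \<in> M"
  using csubspace_add[of M x "(-1) *c y"] csubspace_scale[of M y "-1"]
  by (simp add: cscale_minus_one)

lemma vhom_closed: "vhom M Y N Y' h \<Longrightarrow> x \<in> M \<Longrightarrow> h x \<in> N"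
  and vhom_add: "vhom M Y N Y' h \<Longrightarrow> x \<in> M \<Longrightarrow> y \<in> M \<Longrightarrow> h (x + y) = h x + h y"
  and vhom_scale: "vhom M Y N Y' h \<Longrightarrow> x \<in> M \<Longrightarrow> h (a *c x) = a *c h x"
  and vhom_Y: "vhom M Y N Y' h \<Longrightarrow> x \<in> M \<Longrightarrow> h (Y u n x) = Y' u n (h x)"
  by (simp_all add: vhom_def)

lemma vhom_zero: "vhom M Y N Y' h \<Longrightarrow> csubspace M \<Longrightarrow> h 0 = 0"
  using vhom_scale[of M Y N Y' h 0 0] csubspace_zero by fastforce

lemma vhom_diff:
  assumes "vhom M Y N Y' h" "csubspace M" "x \<in> M" "y \<in> M"
  shows "h (x - y) = h x - h y"
  using vhom_add[OF assms(1,3) csubspace_scale[OF assms(2,4), of "-1"]]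
    vhom_scale[OF assms(1,4), of "-1"]
  by (simp only: cscale_minus_one diff_conv_add_uminus)

lemma vhom_comp: "vhom A YA B YB f \<Longrightarrow> vhom B YB C YC g \<Longrightarrow> vhom A YA C YC (g \<circ> f)"
  by (simp add: vhom_def)

lemma vhom_id_iff_subset: "vhom M Y N Y id \<longleftrightarrow> M \<subseteq> N"
  by (auto simp: vhom_def)

lemma vhom_restrict_target: "vhom M Y N Y' h \<Longrightarrow> h ` M \<subseteq> N' \<Longrightarrow> vhom M Y N' Y' h"
  by (auto simp: vhom_def)

lemma weak_module_csubspace: "weak_module Vop vac M Y \<Longrightarrow> csubspace M"
  and weak_module_closed: "weak_module Vop vac M Y \<Longrightarrow> w \<in> M \<Longrightarrow> Y u n w \<in> M"
  by (simp_all add: weak_module_def)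

lemma weak_module_linear:
  "weak_module Vop vac M Y \<Longrightarrow> w \<in> M \<Longrightarrow> w' \<in> M \<Longrightarrow>
    Y u n (a *c w + b *c w') = a *c Y u n w + b *c Y u n w'"
  unfolding weak_module_def by blast

lemma weak_module_scale: "weak_module Vop vac M Y \<Longrightarrow> w \<in> M \<Longrightarrow> Y u n (c *c w) = c *c Y u n w"
  using weak_module_linear[of Vop vac M Y w w u n c 0] by simp

lemma weak_module_add:
  "weak_module Vop vac M Y \<Longrightarrow> w \<in> M \<Longrightarrow> w' \<in> M \<Longrightarrow> Y u n (w + w') = Y u n w + Y u n w'"
  using weak_module_linear[of Vop vac M Y w w' u n 1 1] by (simp add: cscale_one)

lemma weak_module_zero: "weak_module Vop vac M Y \<Longrightarrow> Y u n 0 = 0"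
  using weak_module_scale[of Vop vac M Y 0 u n 0] weak_module_csubspace csubspace_zero by fastforce

lemma jacobi_subset:
  fixes Vop :: "'v::cvec \<Rightarrow> int \<Rightarrow> 'v \<Rightarrow> 'v" and M :: "'m::cvec set"
  assumes "jacobi Vop M Y" and "N \<subseteq> M"
  shows "jacobi Vop N Y"
proof -
  have restrict: "\<forall>u v. \<forall>w\<in>N. P u v w" if "\<forall>u v. \<forall>w\<in>M. P u v w" for P :: "'v \<Rightarrow> 'v \<Rightarrow> 'm \<Rightarrow> bool"
    using that assms(2) by blast
  show ?thesis
    using restrict[OF assms(1)[unfolded jacobi_def]] unfolding jacobi_def .
qed

lemma weak_module_submodule:
  assumes M: "weak_module Vop vac M Y" and N: "submodule N M Y"
  shows "weak_module Vop vac N Y"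
proof -
  have NM: "N \<subseteq> M" and "csubspace N" "\<forall>u n. \<forall>w\<in>N. Y u n w \<in> N"
    using N by (simp_all add: submodule_def)
  moreover have "jacobi Vop M Y"
    using M by (simp add: weak_module_def)
  then have "jacobi Vop N Y"
    using NM by (rule jacobi_subset)
  ultimately show ?thesis
    using M unfolding weak_module_def by (simp add: subset_iff)
qed

section \<open>Submodules and the class C\<close>

lemma submodule_zero:
  assumes "weak_module Vop vac X YX"
  shows "submodule {0} X YX"
  using csubspace_zero[OF weak_module_csubspace[OF assms]] weak_module_zero[OF assms]
  by (simp add: submodule_def csubspace_def)

lemma submodule_vhom_image:
  assumes h: "vhom A YA X YX h" and A: "weak_module Vop vac A YA"
  shows "submodule (h ` A) X YX"
  unfolding submodule_def csubspace_def
proof (intro conjI allI ballI)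
  have cA: "csubspace A" using A by (rule weak_module_csubspace)
  show "h ` A \<subseteq> X" using vhom_closed[OF h] by blast
  show "0 \<in> h ` A" using vhom_zero[OF h cA] csubspace_zero[OF cA] by (metis image_eqI)
  fix x y c u n assume "x \<in> h ` A"
  then obtain a where a: "a \<in> A" "x = h a" by blast
  show "c *c x \<in> h ` A" using a vhom_scale[OF h] csubspace_scale[OF cA] by (metis image_eqI)
  show "YX u n x \<in> h ` A" using a vhom_Y[OF h] weak_module_closed[OF A] by (metis image_eqI)
  assume "y \<in> h ` A"
  then obtain b where b: "b \<in> A" "y = h b" by blast
  show "x + y \<in> h ` A" using a b vhom_add[OF h] csubspace_add[OF cA] by (metis image_eqI)
qed

lemma submodule_vhom_kernel:
  assumes h: "vhom A YA X YX h" and A: "weak_module Vop vac A YA" and X: "weak_module Vop vac X YX"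
  shows "submodule {a\<in>A. h a = 0} A YA"
proof -
  have cA: "csubspace A" using A by (rule weak_module_csubspace)
  show ?thesis
    unfolding submodule_def csubspace_def
    using vhom_zero[OF h cA] vhom_add[OF h] vhom_scale[OF h] vhom_Y[OF h] weak_module_zero[OF X]
      csubspace_zero[OF cA] csubspace_add[OF cA] csubspace_scale[OF cA] weak_module_closed[OF A]
    by simp
qed

lemma good_class_weak_module:
  "good_class Vop vac om C \<Longrightarrow> (A, YA) \<in> C \<Longrightarrow> weak_module Vop vac A YA"
  unfolding good_class_def gr_gen_module_def by fast

lemma good_class_zero:
  assumes "good_class Vop vac om C"
  obtains YA where "({0}, YA) \<in> C"
  using assms unfolding good_class_def by fast

lemma good_class_quotient:
  assumes "good_class Vop vac om C" "(A, YA) \<in> C" "submodule N A YA"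
  obtains B YB f where "(B, YB) \<in> C" "vhom A YA B YB f" "f ` A = B" "{x\<in>A. f x = 0} = N"
proof -
  have "\<forall>(A, YA)\<in>C. \<forall>N. submodule N A YA \<longrightarrow>
      (\<exists>(B, YB)\<in>C. \<exists>f. vhom A YA B YB f \<and> f ` A = B \<and> {x\<in>A. f x = 0} = N)"
    using assms(1) unfolding good_class_def by (elim conjE)
  from bspec[OF this assms(2), unfolded prod.case, rule_format, OF assms(3)]
  show ?thesis using that by auto
qed

lemma good_class_direct_sum:
  assumes "good_class Vop vac om C" "(A, YA) \<in> C" "(B, YB) \<in> C"
  obtains D YD i1 i2 where "(D, YD) \<in> C" "vhom A YA D YD i1" "vhom B YB D YD i2"
    "\<forall>d\<in>D. \<exists>!p. p \<in> A \<times> B \<and> d = i1 (fst p) + i2 (snd p)"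
proof -
  have "\<forall>(A, YA)\<in>C. \<forall>(B, YB)\<in>C. \<exists>(D, YD)\<in>C. \<exists>i1 i2.
        vhom A YA D YD i1 \<and> vhom B YB D YD i2
        \<and> (\<forall>d\<in>D. \<exists>!p. p \<in> A \<times> B \<and> d = i1 (fst p) + i2 (snd p))"
    using assms(1) unfolding good_class_def by (elim conjE)
  from bspec[OF bspec[OF this assms(2), unfolded prod.case] assms(3), unfolded prod.case]
  show ?thesis using that by auto
qed

lemma inC_obtain:
  assumes "inC C M Y"
  obtains A YA e where "(A, YA) \<in> C" "viso M Y A YA e"
  using assms unfolding inC_def by fast

lemma inC_member: "(A, YA) \<in> C \<Longrightarrow> inC C A YA"
  unfolding inC_def viso_def using vhom_id_iff_subset[of A YA A] bij_betw_id by blast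

lemma viso_inv_into:
  assumes M: "weak_module Vop vac M Y" and e: "viso M Y A YA e"
  shows "viso A YA M Y (inv_into M e)"
proof -
  have eh: "vhom M Y A YA e" and bij: "bij_betw e M A" using e by (auto simp: viso_def)
  have cM: "csubspace M" using M by (rule weak_module_csubspace)
  let ?e' = "inv_into M e"
  have left: "?e' (e m) = m" if "m \<in> M" for m
    using bij that by (simp add: bij_betw_def)
  have right: "?e' a \<in> M" "e (?e' a) = a" if "a \<in> A" for a
    using bij that by (auto simp: bij_betw_def intro: inv_into_into f_inv_into_f)
  have "vhom A YA M Y ?e'"
    unfolding vhom_def
  proof (intro conjI ballI allI)
    fix x y c u n assume x: "x \<in> A"
    show "?e' x \<in> M" using right(1)[OF x] .
    show "?e' (c *c x) = c *c ?e' x"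
      using left[OF csubspace_scale[OF cM right(1)[OF x]]] vhom_scale[OF eh right(1)[OF x]]
        right(2)[OF x]
      by simp
    show "?e' (YA u n x) = Y u n (?e' x)"
      using left[OF weak_module_closed[OF M right(1)[OF x]]] vhom_Y[OF eh right(1)[OF x]]
        right(2)[OF x]
      by simp
    assume y: "y \<in> A"
    show "?e' (x + y) = ?e' x + ?e' y"
      using left[OF csubspace_add[OF cM right(1)[OF x] right(1)[OF y]]]
        vhom_add[OF eh right(1)[OF x] right(1)[OF y]] right(2)[OF x] right(2)[OF y]
      by simp
  qed
  then show ?thesis using bij_betw_inv_into[OF bij] by (simp add: viso_def)
qed

lemma viso_image_same_kernel:
  assumes A: "weak_module Vop vac A YA" and h: "vhom A YA X YX h" and f: "vhom A YA B YB f"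
    and ker: "{a\<in>A. h a = 0} = {a\<in>A. f a = 0}"
  shows "viso (h ` A) YX (f ` A) YB (f \<circ> inv_into A h)"
proof -
  have cA: "csubspace A" using A by (rule weak_module_csubspace)
  have same_fibres: "h a = h a' \<longleftrightarrow> f a = f a'" if "a \<in> A" "a' \<in> A" for a a'
  proof -
    have "h a = h a' \<longleftrightarrow> h (a - a') = 0" using vhom_diff[OF h cA that] by simp
    also have "\<dots> \<longleftrightarrow> f (a - a') = 0" using ker csubspace_diff[OF cA that] by blast
    also have "\<dots> \<longleftrightarrow> f a = f a'" using vhom_diff[OF f cA that] by simp
    finally show ?thesis .
  qed
  let ?k = "f \<circ> inv_into A h"
  have k: "?k (h a) = f a" if "a \<in> A" for a
    using same_fibres[OF inv_into_into[of "h a" h A] that] f_inv_into_f[of "h a" h A] that by simp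
  show ?thesis
    unfolding viso_def vhom_def bij_betw_def inj_on_def
  proof (intro conjI ballI allI impI)
    show "?k ` h ` A = f ` A" using k by (force simp: image_comp)
    fix x y c u n assume "x \<in> h ` A"
    then obtain a where a: "a \<in> A" "x = h a" by blast
    show "?k x \<in> f ` A" using a k by simp
    show "?k (c *c x) = c *c ?k x"
      using a k csubspace_scale[OF cA a(1)] vhom_scale[OF h a(1)] vhom_scale[OF f a(1)] by metis
    show "?k (YX u n x) = YB u n (?k x)"
      using a k weak_module_closed[OF A a(1)] vhom_Y[OF h a(1)] vhom_Y[OF f a(1)] by metis
    assume "y \<in> h ` A"
    then obtain b where b: "b \<in> A" "y = h b" by blast
    show "?k (x + y) = ?k x + ?k y"
      using a b k csubspace_add[OF cA a(1) b(1)] vhom_add[OF h a(1) b(1)] vhom_add[OF f a(1) b(1)]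
      by metis
    show "?k x = ?k y \<Longrightarrow> x = y" using a b k same_fibres by simp
  qed
qed

lemma inC_vhom_image:
  assumes C: "good_class Vop vac om C" and MC: "inC C M Y" and M: "weak_module Vop vac M Y"
    and X: "weak_module Vop vac X YX" and h: "vhom M Y X YX h"
  shows "inC C (h ` M) YX"
proof -
  obtain A YA e where AC: "(A, YA) \<in> C" and e: "viso M Y A YA e"
    using MC by (rule inC_obtain)
  have A: "weak_module Vop vac A YA" using C AC by (rule good_class_weak_module)
  define h' where "h' = h \<circ> inv_into M e"
  have e': "viso A YA M Y (inv_into M e)" using M e by (rule viso_inv_into)
  then have h': "vhom A YA X YX h'"
    unfolding h'_def using h by (auto simp: viso_def intro: vhom_comp)
  have image: "h' ` A = h ` M"
    using e' unfolding h'_def viso_def bij_betw_def by (metis image_comp)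
  obtain B YB f where BC: "(B, YB) \<in> C" and f: "vhom A YA B YB f" "f ` A = B"
    and ker: "{a\<in>A. f a = 0} = {a\<in>A. h' a = 0}"
    using good_class_quotient[OF C AC submodule_vhom_kernel[OF h' A X]] .
  have "viso (h ` M) YX B YB (f \<circ> inv_into A h')"
    using viso_image_same_kernel[OF A h' f(1) ker[symmetric]] by (simp add: image f(2))
  then show ?thesis using BC unfolding inC_def by blast
qed

lemma vhom_direct_sum_copair:
  assumes A: "weak_module Vop vac A YA" and B: "weak_module Vop vac B YB"
    and D: "weak_module Vop vac D YD" and X: "weak_module Vop vac X YX"
    and i1: "vhom A YA D YD i1" and i2: "vhom B YB D YD i2"
    and decomp: "\<forall>d\<in>D. \<exists>!p. p \<in> A \<times> B \<and> d = i1 (fst p) + i2 (snd p)"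
    and g1: "vhom A YA X YX g1" and g2: "vhom B YB X YX g2"
  obtains h where "vhom D YD X YX h" "\<And>a b. a \<in> A \<Longrightarrow> b \<in> B \<Longrightarrow> h (i1 a + i2 b) = g1 a + g2 b"
proof
  have cA: "csubspace A" and cB: "csubspace B" and cD: "csubspace D" and cX: "csubspace X"
    using A B D X by (simp_all add: weak_module_csubspace)
  define h where "h d = (case THE p. p \<in> A \<times> B \<and> d = i1 (fst p) + i2 (snd p) of
      (a, b) \<Rightarrow> g1 a + g2 b)" for d
  have sum_in_D: "i1 a + i2 b \<in> D" if "a \<in> A" "b \<in> B" for a b
    using csubspace_add[OF cD vhom_closed[OF i1 that(1)] vhom_closed[OF i2 that(2)]] .
  show h_sum: "h (i1 a + i2 b) = g1 a + g2 b" if ab: "a \<in> A" "b \<in> B" for a b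
  proof -
    have "(THE p. p \<in> A \<times> B \<and> i1 a + i2 b = i1 (fst p) + i2 (snd p)) = (a, b)"
      using decomp sum_in_D[OF ab] ab by (intro the1_equality) auto
    then show ?thesis unfolding h_def by simp
  qed
  have summands: "\<exists>a\<in>A. \<exists>b\<in>B. d = i1 a + i2 b" if "d \<in> D" for d
    using decomp that by fastforce
  show "vhom D YD X YX h"
    unfolding vhom_def
  proof (intro conjI ballI allI)
    fix d d' c u n assume "d \<in> D"
    then obtain a b where ab: "a \<in> A" "b \<in> B" "d = i1 a + i2 b" using summands by blast
    show "h d \<in> X"
      using ab h_sum csubspace_add[OF cX vhom_closed[OF g1 ab(1)] vhom_closed[OF g2 ab(2)]] by simp
    have "c *c d = i1 (c *c a) + i2 (c *c b)"
      using ab vhom_scale[OF i1 ab(1)] vhom_scale[OF i2 ab(2)] by (simp add: cscale_add_right)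
    then show "h (c *c d) = c *c h d"
      using ab h_sum csubspace_scale[OF cA ab(1)] csubspace_scale[OF cB ab(2)]
        vhom_scale[OF g1 ab(1)] vhom_scale[OF g2 ab(2)] by (simp add: cscale_add_right)
    have "YD u n d = i1 (YA u n a) + i2 (YB u n b)"
      using ab weak_module_add[OF D vhom_closed[OF i1 ab(1)] vhom_closed[OF i2 ab(2)]]
        vhom_Y[OF i1 ab(1)] vhom_Y[OF i2 ab(2)] by simp
    then show "h (YD u n d) = YX u n (h d)"
      using ab h_sum weak_module_closed[OF A ab(1)] weak_module_closed[OF B ab(2)]
        vhom_Y[OF g1 ab(1)] vhom_Y[OF g2 ab(2)]
        weak_module_add[OF X vhom_closed[OF g1 ab(1)] vhom_closed[OF g2 ab(2)]] by simp
    assume "d' \<in> D"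
    then obtain a' b' where ab': "a' \<in> A" "b' \<in> B" "d' = i1 a' + i2 b'" using summands by blast
    have "d + d' = i1 (a + a') + i2 (b + b')"
      using ab ab' vhom_add[OF i1 ab(1) ab'(1)] vhom_add[OF i2 ab(2) ab'(2)] by (simp add: add_ac)
    then show "h (d + d') = h d + h d'"
      using ab ab' h_sum csubspace_add[OF cA ab(1) ab'(1)] csubspace_add[OF cB ab(2) ab'(2)]
        vhom_add[OF g1 ab(1) ab'(1)] vhom_add[OF g2 ab(2) ab'(2)] by (simp add: add_ac)
  qed
qed

lemma submodules_in_C_upper_bound:
  assumes C: "good_class Vop vac om C" and X: "weak_module Vop vac X YX"
    and W1: "submodule W1 X YX" "inC C W1 YX" and W2: "submodule W2 X YX" "inC C W2 YX"
  obtains W where "submodule W X YX" "inC C W YX" "W1 \<subseteq> W" "W2 \<subseteq> W"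
proof -
  have wW1: "weak_module Vop vac W1 YX" using weak_module_submodule[OF X W1(1)] .
  have wW2: "weak_module Vop vac W2 YX" using weak_module_submodule[OF X W2(1)] .
  obtain A YA e1 where AC: "(A, YA) \<in> C" and e1: "viso W1 YX A YA e1"
    using W1(2) by (rule inC_obtain)
  obtain B YB e2 where BC: "(B, YB) \<in> C" and e2: "viso W2 YX B YB e2"
    using W2(2) by (rule inC_obtain)
  obtain D YD i1 i2 where DC: "(D, YD) \<in> C" and i: "vhom A YA D YD i1" "vhom B YB D YD i2"
    and decomp: "\<forall>d\<in>D. \<exists>!p. p \<in> A \<times> B \<and> d = i1 (fst p) + i2 (snd p)"
    using good_class_direct_sum[OF C AC BC] .
  have A: "weak_module Vop vac A YA" and B: "weak_module Vop vac B YB"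
    and D: "weak_module Vop vac D YD"
    using good_class_weak_module[OF C] AC BC DC by blast+
  let ?g1 = "inv_into W1 e1" and ?g2 = "inv_into W2 e2"
  have "vhom A YA W1 YX ?g1" "?g1 ` A = W1" "vhom B YB W2 YX ?g2" "?g2 ` B = W2"
    using viso_inv_into[OF wW1 e1] viso_inv_into[OF wW2 e2] by (simp_all add: viso_def bij_betw_def)
  then have g: "vhom A YA X YX ?g1" "vhom B YB X YX ?g2"
    using W1(1) W2(1) vhom_restrict_target by (metis submodule_def)+
  obtain h where h: "vhom D YD X YX h"
    and h_sum: "\<And>a b. a \<in> A \<Longrightarrow> b \<in> B \<Longrightarrow> h (i1 a + i2 b) = ?g1 a + ?g2 b"
    using vhom_direct_sum_copair[OF A B D X i decomp g] by blast
  have zero: "0 \<in> A" "0 \<in> B" "?g1 0 = 0" "?g2 0 = 0"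
    using A B g by (simp_all add: weak_module_csubspace csubspace_zero vhom_zero)
  have in_D: "i1 a + i2 b \<in> D" if "a \<in> A" "b \<in> B" for a b
    using csubspace_add[OF weak_module_csubspace[OF D]
        vhom_closed[OF i(1) that(1)] vhom_closed[OF i(2) that(2)]] .
  have "W1 \<subseteq> h ` D"
  proof
    fix w assume w: "w \<in> W1"
    have e: "e1 w \<in> A" "?g1 (e1 w) = w"
      using e1 w by (simp_all add: viso_def vhom_def bij_betw_def)
    have "h (i1 (e1 w) + i2 0) = w" using h_sum[OF e(1) zero(2)] e(2) zero(4) by simp
    then show "w \<in> h ` D" using in_D[OF e(1) zero(2)] by (metis image_eqI)
  qed
  moreover have "W2 \<subseteq> h ` D"
  proof
    fix w assume w: "w \<in> W2"
    have e: "e2 w \<in> B" "?g2 (e2 w) = w"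
      using e2 w by (simp_all add: viso_def vhom_def bij_betw_def)
    have "h (i1 0 + i2 (e2 w)) = w" using h_sum[OF zero(1) e(1)] e(2) zero(3) by simp
    then show "w \<in> h ` D" using in_D[OF zero(1) e(1)] by (metis image_eqI)
  qed
  ultimately show ?thesis
    by (rule that[OF submodule_vhom_image[OF h D] inC_vhom_image[OF C inC_member[OF DC] D X h]])
qed

lemma submodules_in_C_directed:
  assumes C: "good_class Vop vac om C" and X: "weak_module Vop vac X YX"
  defines "S \<equiv> {W. submodule W X YX \<and> inC C W YX}"
  shows "\<forall>W1\<in>S. \<forall>W2\<in>S. \<exists>W\<in>S. W1 \<subseteq> W \<and> W2 \<subseteq> W"
proof (intro ballI)
  fix W1 W2 assume "W1 \<in> S" "W2 \<in> S"
  then have "submodule W1 X YX" "inC C W1 YX" "submodule W2 X YX" "inC C W2 YX"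
    by (simp_all add: S_def)
  then obtain W where "submodule W X YX" "inC C W YX" "W1 \<subseteq> W" "W2 \<subseteq> W"
    by (rule submodules_in_C_upper_bound[OF C X])
  then show "\<exists>W\<in>S. W1 \<subseteq> W \<and> W2 \<subseteq> W" unfolding S_def by blast
qed

section \<open>Direct limits of weak modules\<close>

lemma cocone_vhom: "cocone I le M Y f N YN g \<Longrightarrow> i \<in> I \<Longrightarrow> vhom (M i) (Y i) N YN (g i)"
  and cocone_compat:
    "cocone I le M Y f N YN g \<Longrightarrow> i \<in> I \<Longrightarrow> j \<in> I \<Longrightarrow> le i j \<Longrightarrow> x \<in> M i \<Longrightarrow> g j (f i j x) = g i x"
  by (simp_all add: cocone_def)

lemma dsys_directed: "dsys Vop vac I le M Y f \<Longrightarrow> i \<in> I \<Longrightarrow> j \<in> I \<Longrightarrow> \<exists>k\<in>I. le i k \<and> le j k"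
  and dsys_weak_module: "dsys Vop vac I le M Y f \<Longrightarrow> i \<in> I \<Longrightarrow> weak_module Vop vac (M i) (Y i)"
  and dsys_vhom:
    "dsys Vop vac I le M Y f \<Longrightarrow> i \<in> I \<Longrightarrow> j \<in> I \<Longrightarrow> le i j \<Longrightarrow> vhom (M i) (Y i) (M j) (Y j) (f i j)"
  unfolding dsys_def by blast+

lemma colim_wrt_weak_module: "colim_wrt T Vop vac I le M Y f N YN g \<Longrightarrow> weak_module Vop vac N YN"
  and colim_wrt_cocone: "colim_wrt T Vop vac I le M Y f N YN g \<Longrightarrow> cocone I le M Y f N YN g"
  by (simp_all add: colim_wrt_def)

lemma colim_wrt_universal:
  assumes "colim_wrt TYPE('z::cvec) Vop vac I le M Y f N YN g"
    and "weak_module Vop vac (Z::'z set) YZ" and "cocone I le M Y f Z YZ h"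
  obtains u where "vhom N YN Z YZ u" "\<forall>i\<in>I. \<forall>x\<in>M i. u (g i x) = h i x"
    "\<forall>u'. vhom N YN Z YZ u' \<and> (\<forall>i\<in>I. \<forall>x\<in>M i. u' (g i x) = h i x) \<longrightarrow> (\<forall>y\<in>N. u' y = u y)"
proof -
  have "\<forall>(Z::'z set) YZ h. weak_module Vop vac Z YZ \<and> cocone I le M Y f Z YZ h \<longrightarrow>
        (\<exists>u. vhom N YN Z YZ u \<and> (\<forall>i\<in>I. \<forall>x\<in>M i. u (g i x) = h i x)
           \<and> (\<forall>u'. vhom N YN Z YZ u' \<and> (\<forall>i\<in>I. \<forall>x\<in>M i. u' (g i x) = h i x)
                   \<longrightarrow> (\<forall>y\<in>N. u' y = u y)))"
    using assms(1) unfolding colim_wrt_def by (elim conjE)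
  from this[rule_format, OF conjI[OF assms(2,3)]] show ?thesis using that by blast
qed

lemma colim_wrt_hom_ext:
  fixes Z :: "'z::cvec set"
  assumes colim: "colim_wrt TYPE('z) Vop vac I le M Y f N YN g" and Z: "weak_module Vop vac Z YZ"
    and u1: "vhom N YN Z YZ u1" and u2: "vhom N YN Z YZ u2"
    and agree: "\<forall>i\<in>I. \<forall>x\<in>M i. u1 (g i x) = u2 (g i x)"
  shows "\<forall>y\<in>N. u1 y = u2 y"
proof -
  have g: "cocone I le M Y f N YN g" using colim by (rule colim_wrt_cocone)
  have "cocone I le M Y f Z YZ (\<lambda>i. u1 \<circ> g i)"
    using vhom_comp[OF cocone_vhom[OF g] u1] cocone_compat[OF g] by (simp add: cocone_def)
  then obtain u where unique: "\<forall>u'. vhom N YN Z YZ u' \<and>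
      (\<forall>i\<in>I. \<forall>x\<in>M i. u' (g i x) = (u1 \<circ> g i) x) \<longrightarrow> (\<forall>y\<in>N. u' y = u y)"
    by (rule colim_wrt_universal[OF colim Z])
  have "\<forall>y\<in>N. u1 y = u y" using spec[OF unique, of u1] u1 by simp
  moreover have "\<forall>y\<in>N. u2 y = u y" using spec[OF unique, of u2] u2 agree by simp
  ultimately show ?thesis by simp
qed

lemma cocone_images_submodule:
  assumes I: "dsys Vop vac I le M Y f" and N: "weak_module Vop vac N YN"
    and g: "cocone I le M Y f N YN g"
  shows "submodule ({0} \<union> (\<Union>i\<in>I. g i ` M i)) N YN"
    (is "submodule ?U N YN")
  unfolding submodule_def csubspace_def
proof (intro conjI allI ballI)
  have cN: "csubspace N" using N by (rule weak_module_csubspace)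
  show "?U \<subseteq> N" using csubspace_zero[OF cN] vhom_closed[OF cocone_vhom[OF g]] by blast
  show "0 \<in> ?U" by blast
  have image: "g i a \<in> ?U" if "i \<in> I" "a \<in> M i" for i a using that by blast
  fix x y c u n assume x: "x \<in> ?U"
  show "c *c x \<in> ?U"
  proof (cases "x = 0")
    case False
    then obtain i a where ia: "i \<in> I" "a \<in> M i" "x = g i a" using x by blast
    then show ?thesis
      using vhom_scale[OF cocone_vhom[OF g ia(1)] ia(2)]
        image[OF ia(1)
          csubspace_scale[OF weak_module_csubspace[OF dsys_weak_module[OF I ia(1)]] ia(2)]]
      by simp
  qed simp
  show "YN u n x \<in> ?U"
  proof (cases "x = 0")
    case False
    then obtain i a where ia: "i \<in> I" "a \<in> M i" "x = g i a" using x by blast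
    then show ?thesis
      using vhom_Y[OF cocone_vhom[OF g ia(1)] ia(2)]
        image[OF ia(1) weak_module_closed[OF dsys_weak_module[OF I ia(1)] ia(2)]]
      by simp
  qed (simp add: weak_module_zero[OF N])
  assume y: "y \<in> ?U"
  show "x + y \<in> ?U"
  proof (cases "x = 0 \<or> y = 0")
    case False
    obtain i a where ia: "i \<in> I" "a \<in> M i" "x = g i a" using x False by blast
    obtain j b where jb: "j \<in> I" "b \<in> M j" "y = g j b" using y False by blast
    obtain k where k: "k \<in> I" "le i k" "le j k" using dsys_directed[OF I ia(1) jb(1)] by blast
    have a: "f i k a \<in> M k" using vhom_closed[OF dsys_vhom[OF I ia(1) k(1,2)] ia(2)] .
    have b: "f j k b \<in> M k" using vhom_closed[OF dsys_vhom[OF I jb(1) k(1,3)] jb(2)] .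
    have "x + y = g k (f i k a + f j k b)"
      using cocone_compat[OF g ia(1) k(1,2) ia(2)] cocone_compat[OF g jb(1) k(1,3) jb(2)]
        ia(3) jb(3)
        vhom_add[OF cocone_vhom[OF g k(1)] a b] by simp
    then show ?thesis
      using image[OF k(1)
          csubspace_add[OF weak_module_csubspace[OF dsys_weak_module[OF I k(1)]] a b]]
      by simp
  next
    case True
    then have "x + y \<in> {x, y}" by auto
    then show ?thesis using x y by blast
  qed
qed

text \<open>The summand {0} accounts for an empty index set.\<close>

lemma colim_wrt_covered_by_images:
  fixes N :: "'n::cvec set"
  assumes I: "dsys Vop vac I le M Y f" and colim: "colim_wrt TYPE('n) Vop vac I le M Y f N YN g"
  shows "N \<subseteq> {0} \<union> (\<Union>i\<in>I. g i ` M i)"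
proof -
  let ?U = "{0} \<union> (\<Union>i\<in>I. g i ` M i)"
  have N: "weak_module Vop vac N YN" and g: "cocone I le M Y f N YN g"
    using colim by (simp_all add: colim_wrt_weak_module colim_wrt_cocone)
  have U: "submodule ?U N YN" using cocone_images_submodule[OF I N g] .
  have "vhom (M i) (Y i) ?U YN (g i)" if "i \<in> I" for i
    by (rule vhom_restrict_target[OF cocone_vhom[OF g that]]) (use that in blast)
  then have "cocone I le M Y f ?U YN g" using g by (simp add: cocone_def)
  then obtain u where u: "vhom N YN ?U YN u" "\<forall>i\<in>I. \<forall>x\<in>M i. u (g i x) = g i x"
    by (rule colim_wrt_universal[OF colim weak_module_submodule[OF N U]])
  have "u ` N \<subseteq> ?U" using vhom_closed[OF u(1)] by (rule image_subsetI)
  also have "?U \<subseteq> N" using U by (simp add: submodule_def)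
  finally have "vhom N YN N YN u" by (rule vhom_restrict_target[OF u(1)])
  then have u_id: "\<forall>y\<in>N. u y = id y"
    by (rule colim_wrt_hom_ext[OF colim N])
      (simp_all add: vhom_id_iff_subset[of N YN N, unfolded id_def] u(2))
  show ?thesis
  proof
    fix y assume "y \<in> N"
    then show "y \<in> ?U" using u_id vhom_closed[OF u(1)] by fastforce
  qed
qed

lemma colim_wrt_covered_by_images_nonempty:
  fixes N :: "'n::cvec set"
  assumes I: "dsys Vop vac I le M Y f" and colim: "colim_wrt TYPE('n) Vop vac I le M Y f N YN g"
    and "i \<in> I"
  shows "N \<subseteq> (\<Union>i\<in>I. g i ` M i)"
proof -
  have "g i 0 = 0" "0 \<in> M i"
    using vhom_zero[OF cocone_vhom[OF colim_wrt_cocone[OF colim] \<open>i \<in> I\<close>]]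
      weak_module_csubspace[OF dsys_weak_module[OF I \<open>i \<in> I\<close>]] csubspace_zero by blast+
  then have "0 \<in> (\<Union>i\<in>I. g i ` M i)" using \<open>i \<in> I\<close> by (metis UN_I image_eqI)
  then show ?thesis using colim_wrt_covered_by_images[OF I colim] by (simp add: insert_absorb)
qed

section \<open>Directed families of submodules\<close>

lemma dsys_submodule_inclusions:
  fixes X :: "'x::cvec set"
  assumes X: "weak_module Vop vac X YX" and sub: "\<forall>W\<in>IX. submodule W X YX"
    and directed: "\<forall>W1\<in>IX. \<forall>W2\<in>IX. \<exists>W\<in>IX. W1 \<subseteq> W \<and> W2 \<subseteq> W"
  shows "dsys Vop vac IX (\<subseteq>) (\<lambda>W. W) (\<lambda>W. YX) (\<lambda>W W'. id)"
  unfolding dsys_def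
proof (intro conjI ballI impI)
  fix W W' assume "W \<in> IX" "W' \<in> IX"
  then show "\<exists>W''\<in>IX. W \<subseteq> W'' \<and> W' \<subseteq> W''" using directed by blast
next
  fix W assume "W \<in> IX"
  then show "weak_module Vop vac W YX" using weak_module_submodule[OF X] sub by blast
next
  fix W W' :: "'x set" assume "W \<subseteq> W'"
  then show "vhom W YX W' YX id" by (simp add: vhom_id_iff_subset)
qed auto

lemma cocone_submodule_inclusions_glue:
  assumes sub: "\<forall>W\<in>IX. submodule W X YX"
    and directed: "\<forall>W1\<in>IX. \<forall>W2\<in>IX. \<exists>W\<in>IX. W1 \<subseteq> W \<and> W2 \<subseteq> W"
    and cover: "X \<subseteq> \<Union>IX"
    and h: "cocone IX (\<subseteq>) (\<lambda>W. W) (\<lambda>W. YX) (\<lambda>W W'. id) Z YZ h"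
  obtains u where "vhom X YX Z YZ u" "\<forall>W\<in>IX. \<forall>x\<in>W. u x = h W x"
proof
  have h_compat: "h W' x = h W x" if "W \<in> IX" "W' \<in> IX" "W \<subseteq> W'" "x \<in> W" for W W' x
    using cocone_compat[OF h that] by simp
  have h_vhom: "vhom W YX Z YZ (h W)" if "W \<in> IX" for W
    using cocone_vhom[OF h that] by simp
  define u where "u x = h (SOME W. W \<in> IX \<and> x \<in> W) x" for x
  show u_eq: "\<forall>W\<in>IX. \<forall>x\<in>W. u x = h W x"
  proof (intro ballI)
    fix W x assume W: "W \<in> IX" "x \<in> W"
    let ?W = "SOME W. W \<in> IX \<and> x \<in> W"
    have "\<exists>W. W \<in> IX \<and> x \<in> W" using W by blast
    then have "?W \<in> IX \<and> x \<in> ?W" by (rule someI_ex)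
    then have W': "?W \<in> IX" "x \<in> ?W" by simp_all
    obtain W'' where W'': "W'' \<in> IX" "W \<subseteq> W''" "?W \<subseteq> W''"
      using directed[rule_format, OF W(1) W'(1)] by blast
    have "u x = h W'' x" unfolding u_def using h_compat[OF W'(1) W''(1,3) W'(2)] by simp
    also have "\<dots> = h W x" using h_compat[OF W(1) W''(1,2) W(2)] .
    finally show "u x = h W x" .
  qed
  have common: "\<exists>W\<in>IX. x \<in> W \<and> y \<in> W" if xy: "x \<in> X" "y \<in> X" for x y
  proof -
    obtain W1 where W1: "W1 \<in> IX" "x \<in> W1" using cover xy(1) by blast
    obtain W2 where W2: "W2 \<in> IX" "y \<in> W2" using cover xy(2) by blast
    show ?thesis using directed[rule_format, OF W1(1) W2(1)] W1(2) W2(2) by blast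
  qed
  have W_sub: "csubspace W" "\<forall>v n. \<forall>w\<in>W. YX v n w \<in> W" if "W \<in> IX" for W
    using sub that by (simp_all add: submodule_def)
  show "vhom X YX Z YZ u"
    unfolding vhom_def
  proof (intro conjI ballI allI)
    fix x c v n assume "x \<in> X"
    then obtain W where W: "W \<in> IX" "x \<in> W" using cover by blast
    have u_W: "u x' = h W x'" if "x' \<in> W" for x' using u_eq W(1) that by blast
    show "u x \<in> Z" using u_W[OF W(2)] vhom_closed[OF h_vhom[OF W(1)] W(2)] by simp
    show "u (c *c x) = c *c u x"
      using u_W W(2) csubspace_scale[OF W_sub(1)[OF W(1)] W(2)] vhom_scale[OF h_vhom[OF W(1)] W(2)]
      by simp
    show "u (YX v n x) = YZ v n (u x)"
      using u_W W(2) W_sub(2)[OF W(1)] vhom_Y[OF h_vhom[OF W(1)] W(2)] by simp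
  next
    fix x y assume "x \<in> X" "y \<in> X"
    then obtain W where W: "W \<in> IX" "x \<in> W" "y \<in> W" using common by blast
    have u_W: "u x' = h W x'" if "x' \<in> W" for x' using u_eq W(1) that by blast
    show "u (x + y) = u x + u y"
      using u_W W(2,3) csubspace_add[OF W_sub(1)[OF W(1)] W(2,3)]
        vhom_add[OF h_vhom[OF W(1)] W(2,3)]
      by simp
  qed
qed

lemma colim_wrt_directed_union:
  assumes X: "weak_module Vop vac X YX" and sub: "\<forall>W\<in>IX. submodule W X YX"
    and directed: "\<forall>W1\<in>IX. \<forall>W2\<in>IX. \<exists>W\<in>IX. W1 \<subseteq> W \<and> W2 \<subseteq> W"
    and cover: "X \<subseteq> \<Union>IX"
  shows "colim_wrt TYPE('z::cvec) Vop vac IX (\<subseteq>) (\<lambda>W. W) (\<lambda>W. YX) (\<lambda>W W'. id) X YX (\<lambda>W x. x)"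
  unfolding colim_wrt_def
proof (intro conjI allI impI)
  show "weak_module Vop vac X YX" using X .
  show "cocone IX (\<subseteq>) (\<lambda>W. W) (\<lambda>W. YX) (\<lambda>W W'. id) X YX (\<lambda>W x. x)"
    using sub by (auto simp: cocone_def vhom_def submodule_def)
  fix Z :: "'z set" and YZ h
  assume "weak_module Vop vac Z YZ \<and> cocone IX (\<subseteq>) (\<lambda>W. W) (\<lambda>W. YX) (\<lambda>W W'. id) Z YZ h"
  then obtain u where u: "vhom X YX Z YZ u" "\<forall>W\<in>IX. \<forall>x\<in>W. u x = h W x"
    by (elim conjE cocone_submodule_inclusions_glue[OF sub directed cover])
  have "\<forall>y\<in>X. u' y = u y" if "\<forall>W\<in>IX. \<forall>x\<in>W. u' x = h W x" for u'
  proof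
    fix y assume "y \<in> X"
    then obtain W where "W \<in> IX" "y \<in> W" using cover by blast
    then show "u' y = u y" using that u(2) by simp
  qed
  then show "\<exists>u. vhom X YX Z YZ u \<and> (\<forall>W\<in>IX. \<forall>x\<in>W. u x = h W x) \<and>
      (\<forall>u'. vhom X YX Z YZ u' \<and> (\<forall>W\<in>IX. \<forall>x\<in>W. u' x = h W x) \<longrightarrow> (\<forall>y\<in>X. u' y = u y))"
    using u by blast
qed

lemma inj_on_directed_cocone_retraction:
  assumes directed: "\<forall>W1\<in>IX. \<forall>W2\<in>IX. \<exists>W\<in>IX. W1 \<subseteq> W \<and> W2 \<subseteq> W"
    and phi: "cocone IX (\<subseteq>) (\<lambda>W. W) (\<lambda>W. YX) (\<lambda>W W'. id) L YL phi"
    and cover: "L \<subseteq> (\<Union>W\<in>IX. phi W ` W)"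
    and retraction: "\<forall>W\<in>IX. \<forall>x\<in>W. Q (phi W x) = x"
  shows "inj_on Q L"
proof (rule inj_onI)
  fix l l' assume l: "l \<in> L" "l' \<in> L" and eq: "Q l = Q l'"
  obtain W a where a: "W \<in> IX" "a \<in> W" "l = phi W a" using cover l(1) by blast
  obtain W' a' where a': "W' \<in> IX" "a' \<in> W'" "l' = phi W' a'" using cover l(2) by blast
  obtain W'' where W'': "W'' \<in> IX" "W \<subseteq> W''" "W' \<subseteq> W''"
    using directed[rule_format, OF a(1) a'(1)] by blast
  have "a = a'" using eq a a' retraction by simp
  then show "l = l'"
    using cocone_compat[OF phi a(1) W''(1,2) a(2)] cocone_compat[OF phi a'(1) W''(1,3) a'(2)] a a'
    by simp
qed

lemma image_cocone_retraction:
  assumes cover: "L \<subseteq> (\<Union>W\<in>IX. phi W ` W)" and into: "\<forall>W\<in>IX. \<forall>x\<in>W. phi W x \<in> L"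
    and retraction: "\<forall>W\<in>IX. \<forall>x\<in>W. Q (phi W x) = x"
  shows "Q ` L = \<Union>IX"
proof
  show "Q ` L \<subseteq> \<Union>IX" using cover retraction by fastforce
  show "\<Union>IX \<subseteq> Q ` L"
  proof
    fix x assume "x \<in> \<Union>IX"
    then obtain W where "W \<in> IX" "x \<in> W" by blast
    then have "x = Q (phi W x)" "phi W x \<in> L" using retraction into by auto
    then show "x \<in> Q ` L" by (rule image_eqI)
  qed
qed

lemma inC_zero:
  assumes C: "good_class Vop vac om C" and X: "weak_module Vop vac X YX"
  shows "inC C {0} YX"
proof -
  obtain YA where ZC: "({0}, YA) \<in> C" using C by (rule good_class_zero)
  have Z: "weak_module Vop vac {0} YA" using C ZC by (rule good_class_weak_module)
  have "vhom {0} YA X YX (\<lambda>_. 0)"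
    using csubspace_zero[OF weak_module_csubspace[OF X]] weak_module_zero[OF X]
    by (simp add: vhom_def)
  from inC_vhom_image[OF C inC_member[OF ZC] Z X this] show ?thesis by simp
qed

lemma in_Ind_covered_by_submodules_in_C:
  fixes X :: "'x::cvec set"
  assumes C: "good_class Vop vac om C" and X: "weak_module Vop vac X YX"
    and Ind: "in_Ind TYPE('x) TYPE('i) TYPE('m::cvec) Vop vac C X YX"
  shows "X \<subseteq> \<Union>{W. submodule W X YX \<and> inC C W YX}"
proof -
  obtain I :: "'i set" and le and M :: "'i \<Rightarrow> 'm set" and Y f g
    where I: "dsys Vop vac I le M Y f" and MC: "\<forall>i\<in>I. inC C (M i) (Y i)"
      and colim: "colim_wrt TYPE('x) Vop vac I le M Y f X YX g"
    using Ind unfolding in_Ind_def by (elim exE conjE) (rule that, assumption+)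
  have "g i ` M i \<in> {W. submodule W X YX \<and> inC C W YX}" if i: "i \<in> I" for i
  proof -
    have g: "vhom (M i) (Y i) X YX (g i)" using cocone_vhom[OF colim_wrt_cocone[OF colim] i] .
    have M: "weak_module Vop vac (M i) (Y i)" using dsys_weak_module[OF I i] .
    show ?thesis
      using submodule_vhom_image[OF g M] inC_vhom_image[OF C bspec[OF MC i] M X g] by simp
  qed
  moreover have "{0} \<in> {W. submodule W X YX \<and> inC C W YX}"
    using submodule_zero[OF X] inC_zero[OF C X] by simp
  ultimately have "{0} \<union> (\<Union>i\<in>I. g i ` M i) \<subseteq> \<Union>{W. submodule W X YX \<and> inC C W YX}"
    by (intro Un_least UN_least Union_upper)
  then show ?thesis using colim_wrt_covered_by_images[OF I colim] by (rule order_trans[rotated])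
qed

lemma in_Ind_directed_union:
  fixes X :: "'x::cvec set"
  assumes X: "weak_module Vop vac X YX" and sub: "\<forall>W\<in>IX. submodule W X YX"
    and directed: "\<forall>W1\<in>IX. \<forall>W2\<in>IX. \<exists>W\<in>IX. W1 \<subseteq> W \<and> W2 \<subseteq> W"
    and cover: "X \<subseteq> \<Union>IX" and IX_C: "\<forall>W\<in>IX. inC C W YX"
  shows "in_Ind TYPE('z::cvec) TYPE('x set) TYPE('x) Vop vac C X YX"
  using dsys_submodule_inclusions[OF X sub directed] IX_C
    colim_wrt_directed_union[OF X sub directed cover]
  unfolding in_Ind_def by blast

theorem proposition4:
  fixes Vop :: "'v::cvec \<Rightarrow> int \<Rightarrow> 'v \<Rightarrow> 'v" and vac om :: 'v
    and C :: "('c::cvec set \<times> ('v \<Rightarrow> int \<Rightarrow> 'c \<Rightarrow> 'c)) set"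
    and X :: "'x::cvec set" and YX :: "'v \<Rightarrow> int \<Rightarrow> 'x \<Rightarrow> 'x"
    and IX :: "'x set set"
    and L :: "'l::cvec set" and YL :: "'v \<Rightarrow> int \<Rightarrow> 'l \<Rightarrow> 'l"
    and phi :: "'x set \<Rightarrow> 'x \<Rightarrow> 'l" and Q :: "'l \<Rightarrow> 'x"
  assumes "voa Vop vac om"
    and "good_class Vop vac om C"
    and "weak_module Vop vac X YX"
    and IX_def: "IX = {W. submodule W X YX \<and> inC C W YX}"
    and "colim_wrt TYPE('l) Vop vac IX (\<subseteq>) (\<lambda>W. W) (\<lambda>W. YX) (\<lambda>W W'. id) L YL phi"
    and "colim_wrt TYPE('x) Vop vac IX (\<subseteq>) (\<lambda>W. W) (\<lambda>W. YX) (\<lambda>W W'. id) L YL phi"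
    and "vhom L YL X YX Q"
    and "\<forall>W\<in>IX. \<forall>x\<in>W. Q (phi W x) = x"
  shows "inj_on Q L
       \<and> (Q ` L = X \<longrightarrow> in_Ind TYPE('z::cvec) TYPE('x set) TYPE('x) Vop vac C X YX)
       \<and> (in_Ind TYPE('x) TYPE('i) TYPE('m::cvec) Vop vac C X YX \<longrightarrow> Q ` L = X)"
proof -
  note C = assms(2) and X = assms(3) and colim = assms(5) and Q_phi = assms(8)
  have phi: "cocone IX (\<subseteq>) (\<lambda>W. W) (\<lambda>W. YX) (\<lambda>W W'. id) L YL phi"
    using colim by (rule colim_wrt_cocone)
  have sub: "\<forall>W\<in>IX. submodule W X YX" and IX_C: "\<forall>W\<in>IX. inC C W YX" and zero: "{0} \<in> IX"
    using IX_def submodule_zero[OF X] inC_zero[OF C X] by simp_all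
  have directed: "\<forall>W1\<in>IX. \<forall>W2\<in>IX. \<exists>W\<in>IX. W1 \<subseteq> W \<and> W2 \<subseteq> W"
    unfolding IX_def by (rule submodules_in_C_directed[OF C X])
  have L_cover: "L \<subseteq> (\<Union>W\<in>IX. phi W ` W)"
    using dsys_submodule_inclusions[OF X sub directed] colim zero
    by (rule colim_wrt_covered_by_images_nonempty)
  have "\<forall>W\<in>IX. \<forall>x\<in>W. phi W x \<in> L" using vhom_closed[OF cocone_vhom[OF phi]] by simp
  then have image_Q: "Q ` L = \<Union>IX" using image_cocone_retraction[OF L_cover _ Q_phi] by blast
  have "\<Union>IX \<subseteq> X" using sub by (auto simp: submodule_def)
  then have Q_surj_iff: "Q ` L = X \<longleftrightarrow> X \<subseteq> \<Union>IX" unfolding image_Q by auto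
  show ?thesis
  proof (intro conjI impI)
    show "inj_on Q L" using inj_on_directed_cocone_retraction[OF directed phi L_cover Q_phi] .
    show "in_Ind TYPE('z) TYPE('x set) TYPE('x) Vop vac C X YX" if "Q ` L = X"
      using in_Ind_directed_union[OF X sub directed _ IX_C] that Q_surj_iff by simp
    show "Q ` L = X" if "in_Ind TYPE('x) TYPE('i) TYPE('m) Vop vac C X YX"
      using in_Ind_covered_by_submodules_in_C[OF C X that, folded IX_def] Q_surj_iff by simp
  qed
qed

end
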